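(* Let $\bm A\in\mathbb R^{m\times n}$, $\bm D\in\mathbb R^{n\times d}$ with $\bm D\bm D^\top=\bm I_n$, $0<\alpha\le1$, and let $s\ge2$ be an integer. Let $\bm h,\bm x\in\mathbb R^n$, let $S$ be an index set of $s$ largest-magnitude entries of $\bm D^\top\bm h$ and $T$ an index set of $s$ largest-magnitude entries of $\bm D^\top\bm x$, and assume $$\|\bm D_{S^c}^\top\bm h\|_1-\alpha\|\bm D_{S^c}^\top\bm h\|_2\le a\|\bm D_S^\top\bm h\|_1+b\|\bm D_S^\top\bm h\|_2+c\|\bm D_{T^c}^\top\bm x\|_1+\eta\|\bm A\bm h\|_2+\gamma$$ for constants $a>0$, $b,c,\eta,\gamma\ge0$ with $(a-1)\sqrt s+(b+1)\ge0$. Then for every $\bar\varepsilon>0$, $$\|\bm D_{S^c}^\top\bm h\|_2\le\Bigg(\sqrt{\frac{a\sqrt s+b}{\sqrt s}+\frac{\alpha^2}{4s}}+\frac{\alpha+\bar\varepsilon}{2\sqrt s}\Bigg)\|\bm D_S^\top\bm h\|_2+\frac1{2\bar\varepsilon}\big(c\|\bm D_{T^c}^\top\bm x\|_1+\eta\|\bm A\bm h\|_2+\gamma\big).$$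
   Context: For an index set $S\subseteq\{1,\dots,d\}$, $S^c$ is its complement and $\bm D_S$ denotes $\bm D$ with all columns not indexed by $S$ set to zero (so $\bm D_S^\top\bm h$ is $\bm D^\top\bm h$ with entries outside $S$ set to zero). *)

theory Defs
  imports "HOL-Analysis.Analysis"
begin

text \<open>v_S: the vector v with all entries outside S set to zero
  (so restr S (transpose D *v h) is D_S^T h).\<close>
definition restr :: "'d set \<Rightarrow> real^'d \<Rightarrow> real^'d" where
  "restr S v = (\<chi> i. if i \<in> S then v $ i else 0)"

text \<open>The l1 norm; the l2 norm is the library's norm on real^'d.\<close>
definition norm1 :: "real^'d \<Rightarrow> real" where
  "norm1 v = (\<Sum>i\<in>UNIV. \<bar>v $ i\<bar>)"

definition largest_idx :: "nat \<Rightarrow> real^'d \<Rightarrow> 'd set \<Rightarrow> bool" where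
  "largest_idx s v S \<longleftrightarrow> card S = s \<and>
     (\<forall>i\<in>S. \<forall>j\<in>- S. \<bar>v $ j\<bar> \<le> \<bar>v $ i\<bar>)"

end

theory Submission
  imports Defs
begin

text \<open>Write v = D^T h and R = c |D_{T^c}^T x|_1 + \<eta> |A h|_2 + \<gamma>. Every entry of v off S
  is at most the mean |v_S|_1 / s \<le> |v_S|_2 / sqrt s of the entries on S, hence
  |v_{S^c}|_2^2 \<le> |v_S|_2 |v_{S^c}|_1 / sqrt s. Bounding |v_{S^c}|_1 by the hypothesis turns
  this into a quadratic inequality in |v_{S^c}|_2; solving it and splitting the square root
  of the cross term |v_S|_2 R / sqrt s by AM-GM with weight \<epsilon> gives the claim.\<close>

lemma norm1_restr: "norm1 (restr S v) = (\<Sum>i\<in>S. \<bar>v $ i\<bar>)"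
  unfolding norm1_def restr_def
  by (simp add: if_distrib[where f=abs] sum.If_cases cong: if_cong)

lemma norm1_nonneg: "norm1 v \<ge> 0"
  by (simp add: norm1_def sum_nonneg)

lemma norm1_restr_le_sqrt_card_norm:
  "norm1 (restr S (v::real^'d)) \<le> sqrt (card S) * norm (restr S v)"
proof -
  let ?\<chi>S = "\<lambda>i::'d. if i \<in> S then 1 else (0::real)"
  have "norm1 (restr S v) = (\<Sum>i\<in>UNIV. \<bar>restr S v $ i\<bar> * \<bar>?\<chi>S i\<bar>)"
    unfolding norm1_def by (intro sum.cong) (auto simp: restr_def)
  also have "\<dots> \<le> L2_set (\<lambda>i. restr S v $ i) UNIV * L2_set ?\<chi>S UNIV"
    using L2_set_mult_ineq[of "\<lambda>i. restr S v $ i" ?\<chi>S UNIV] by simp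
  also have "L2_set ?\<chi>S UNIV = sqrt (card S)"
    by (simp add: L2_set_def if_distrib[where f="\<lambda>x. x\<^sup>2"] sum.If_cases cong: if_cong)
  finally show ?thesis
    by (simp add: norm_vec_def L2_set_def mult.commute)
qed

lemma abs_le_norm1_restr_largest_div:
  assumes S: "largest_idx s v S" and "s > 0" and "i \<notin> S"
  shows "\<bar>v $ i\<bar> \<le> norm1 (restr S v) / s"
proof -
  have "s * \<bar>v $ i\<bar> = (\<Sum>j\<in>S. \<bar>v $ i\<bar>)"
    using S by (simp add: largest_idx_def)
  also have "\<dots> \<le> (\<Sum>j\<in>S. \<bar>v $ j\<bar>)"
    using S \<open>i \<notin> S\<close> by (intro sum_mono) (auto simp: largest_idx_def)
  finally show ?thesis
    using \<open>s > 0\<close> by (simp add: norm1_restr field_simps)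
qed

lemma norm_restr_compl_sq_le_largest:
  assumes S: "largest_idx s (v::real^'d) S" and s: "s > 0"
  shows "(norm (restr (- S) v))\<^sup>2 \<le> norm (restr S v) / sqrt s * norm1 (restr (- S) v)"
proof -
  let ?M = "norm1 (restr S v) / s"
  have "(norm (restr (- S) v))\<^sup>2 = (\<Sum>i\<in>UNIV. \<bar>restr (- S) v $ i\<bar> * \<bar>restr (- S) v $ i\<bar>)"
    by (simp add: norm_vec_def L2_set_def sum_nonneg power2_eq_square)
  also have "\<dots> \<le> (\<Sum>i\<in>UNIV. ?M * \<bar>restr (- S) v $ i\<bar>)"
  proof (intro sum_mono)
    fix i
    show "\<bar>restr (- S) v $ i\<bar> * \<bar>restr (- S) v $ i\<bar> \<le> ?M * \<bar>restr (- S) v $ i\<bar>"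
    proof (cases "i \<in> S")
      case False
      then show ?thesis
        using mult_right_mono[OF abs_le_norm1_restr_largest_div[OF S s False], of "\<bar>v $ i\<bar>"]
        by (simp add: restr_def)
    qed (simp add: restr_def)
  qed
  also have "\<dots> = ?M * norm1 (restr (- S) v)"
    by (simp add: norm1_def sum_distrib_left)
  also have "\<dots> \<le> norm (restr S v) / sqrt s * norm1 (restr (- S) v)"
  proof (intro mult_right_mono norm1_nonneg)
    have "?M \<le> sqrt s * norm (restr S v) / s"
      using norm1_restr_le_sqrt_card_norm[of S v] S s
      by (simp add: largest_idx_def divide_right_mono)
    also have "\<dots> = norm (restr S v) / sqrt s"
      using s by (simp add: field_simps real_sqrt_mult_self[symmetric, of s])
    finally show "?M \<le> norm (restr S v) / sqrt s" .
  qed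
  finally show ?thesis .
qed

lemma le_of_quadratic_le:
  fixes x p r :: real
  assumes "x\<^sup>2 \<le> p * x + r"
  shows "x \<le> p / 2 + sqrt (p\<^sup>2 / 4 + r)"
proof -
  have "(x - p / 2)\<^sup>2 \<le> p\<^sup>2 / 4 + r"
    using assms by (simp add: power2_eq_square algebra_simps)
  then have "x - p / 2 \<le> sqrt (p\<^sup>2 / 4 + r)"
    by (rule real_le_rsqrt)
  then show ?thesis by simp
qed

lemma quadratic_tail_bound:
  fixes X Y K R \<alpha> t \<epsilon> :: real
  assumes quad: "X\<^sup>2 \<le> \<alpha> * Y / t * X + K * Y\<^sup>2 + Y * R / t"
    and "Y \<ge> 0" "K \<ge> 0" "R \<ge> 0" "t > 0" "\<epsilon> > 0"
  shows "X \<le> (sqrt (K + \<alpha>\<^sup>2 / (4 * t\<^sup>2)) + (\<alpha> + \<epsilon>) / (2 * t)) * Y + 1 / (2 * \<epsilon>) * R"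
proof -
  have "X \<le> \<alpha> * Y / t / 2 + sqrt ((\<alpha> * Y / t)\<^sup>2 / 4 + (K * Y\<^sup>2 + Y * R / t))"
    using le_of_quadratic_le[of X "\<alpha> * Y / t" "K * Y\<^sup>2 + Y * R / t"] quad
    by (simp add: add.assoc)
  also have "(\<alpha> * Y / t)\<^sup>2 / 4 + (K * Y\<^sup>2 + Y * R / t)
      = (K + \<alpha>\<^sup>2 / (4 * t\<^sup>2)) * Y\<^sup>2 + (\<epsilon> * Y / t) * (R / \<epsilon>)"
    using assms by (simp add: field_simps power2_eq_square)
  also have "sqrt \<dots> \<le> sqrt (K + \<alpha>\<^sup>2 / (4 * t\<^sup>2)) * Y + sqrt ((\<epsilon> * Y / t) * (R / \<epsilon>))"
    using sqrt_add_le_add_sqrt[of "(K + \<alpha>\<^sup>2 / (4 * t\<^sup>2)) * Y\<^sup>2" "(\<epsilon> * Y / t) * (R / \<epsilon>)"] assms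
    by (simp add: real_sqrt_mult)
  also have "sqrt ((\<epsilon> * Y / t) * (R / \<epsilon>)) \<le> (\<epsilon> * Y / t + R / \<epsilon>) / 2"
    using assms by (intro arith_geo_mean_sqrt) simp_all
  finally show ?thesis
    using assms by (simp add: field_simps)
qed

theorem proposition3:
  fixes A :: "real^'n^'m" and D :: "real^'d^'n"
    and h x :: "real^'n" and S T :: "'d set" and s :: nat
    and \<alpha> a b c \<eta> \<gamma> \<epsilon> :: real
  assumes DD: "D ** transpose D = mat 1"
    and alpha: "0 < \<alpha>" "\<alpha> \<le> 1"
    and s2: "s \<ge> 2"
    and S: "largest_idx s (transpose D *v h) S"
    and T: "largest_idx s (transpose D *v x) T"
    and cst: "a > 0" "b \<ge> 0" "c \<ge> 0" "\<eta> \<ge> 0" "\<gamma> \<ge> 0"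
    and ab: "(a - 1) * sqrt s + (b + 1) \<ge> 0"
    and hyp: "norm1 (restr (- S) (transpose D *v h)) - \<alpha> * norm (restr (- S) (transpose D *v h))
       \<le> a * norm1 (restr S (transpose D *v h)) + b * norm (restr S (transpose D *v h))
         + c * norm1 (restr (- T) (transpose D *v x)) + \<eta> * norm (A *v h) + \<gamma>"
    and eps: "\<epsilon> > 0"
  shows "norm (restr (- S) (transpose D *v h))
    \<le> (sqrt ((a * sqrt s + b) / sqrt s + \<alpha>^2 / (4 * s)) + (\<alpha> + \<epsilon>) / (2 * sqrt s))
         * norm (restr S (transpose D *v h))
       + 1 / (2 * \<epsilon>) * (c * norm1 (restr (- T) (transpose D *v x)) + \<eta> * norm (A *v h) + \<gamma>)"
proof -
  define v where "v = transpose D *v h"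
  define X Y where "X = norm (restr (- S) v)" and "Y = norm (restr S v)"
  define R where "R = c * norm1 (restr (- T) (transpose D *v x)) + \<eta> * norm (A *v h) + \<gamma>"
  define t where "t = sqrt s"
  have s0: "s > 0" and t0: "t > 0" and ts: "t\<^sup>2 = s"
    using s2 by (simp_all add: t_def)
  have R0: "R \<ge> 0"
    using cst by (simp add: R_def norm1_nonneg)
  have "norm1 (restr S v) \<le> t * Y"
    using norm1_restr_le_sqrt_card_norm[of S v] S by (simp add: largest_idx_def Y_def t_def)
  then have "a * norm1 (restr S v) \<le> a * (t * Y)"
    using cst by simp
  then have "norm1 (restr (- S) v) \<le> \<alpha> * X + a * (t * Y) + b * Y + R"
    using hyp unfolding X_def Y_def R_def v_def by linarith
  then have "Y / t * norm1 (restr (- S) v) \<le> Y / t * (\<alpha> * X + a * (t * Y) + b * Y + R)"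
    using t0 by (intro mult_left_mono) (simp_all add: Y_def)
  moreover have "X\<^sup>2 \<le> Y / t * norm1 (restr (- S) v)"
    using norm_restr_compl_sq_le_largest[OF S[folded v_def] s0] by (simp add: X_def Y_def t_def)
  ultimately have "X\<^sup>2 \<le> \<alpha> * Y / t * X + (a * t + b) / t * Y\<^sup>2 + Y * R / t"
    using t0 by (simp add: field_simps power2_eq_square)
  from quadratic_tail_bound[OF this _ _ R0 t0 eps] cst t0
  show ?thesis
    unfolding X_def Y_def R_def v_def by (simp add: ts t_def)
qed

end
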